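(* Let $d\in\mathbb{N}$. Then $$\Pi=\bigcap_{\psi\in\mathcal{D}'}W(\psi),$$ where $\mathcal{D}'\subset\mathcal{D}$ consists of those functions in $\mathcal{D}$ all of whose values are reciprocals of natural numbers.
   Context: For $z\in\mathbb{R}^d$, $\|z\|$ denotes the sup-norm distance from $z$ to $\mathbb{Z}^d$. Write $\mathbb{N}=\{1,2,\dots\}$. For $\psi:\mathbb{N}\to\mathbb{R}_{\ge 0}$, let $W(\psi)$ be the set of pairs $(x,y)\in\mathbb{R}^d\times\mathbb{R}^d$ for which $\|nx+y\|<\psi(n)$ holds for infinitely many $n\in\mathbb{N}$. $\mathcal{D}$ is the set of all non-increasing $\psi:\mathbb{N}\to\mathbb{R}_{\ge0}$ with $\sum_n\psi(n)^d=\infty$, and $\Pi=\bigcap_{\psi\in\mathcal{D}}W(\psi)$. *)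

theory Defs
  imports "HOL-Analysis.Analysis"
begin

definition znorm :: "real ^ 'd \<Rightarrow> real" where
  "znorm z = (MAX i \<in> UNIV. \<bar>z $ i - of_int (round (z $ i))\<bar>)"

definition W :: "(nat \<Rightarrow> real) \<Rightarrow> ((real ^ 'd) \<times> (real ^ 'd)) set" where
  "W psi = {(x, y). infinite {n::nat. n \<ge> 1 \<and> znorm (of_nat n *\<^sub>R x + y) < psi n}}"

text \<open>The class D (for dimension d = CARD('d)): non-increasing psi : N -> R_{>=0}
with sum psi(n)^d divergent. Functions are nat => real; only values at n >= 1 matter.\<close>
definition DD :: "'d itself \<Rightarrow> (nat \<Rightarrow> real) set" where
  "DD _ = {psi. (\<forall>n\<ge>1. psi n \<ge> 0) \<and> (\<forall>m n. 1 \<le> m \<and> m \<le> n \<longrightarrow> psi n \<le> psi m)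
              \<and> \<not> summable (\<lambda>n. psi (Suc n) ^ CARD('d))}"

definition DD' :: "'d itself \<Rightarrow> (nat \<Rightarrow> real) set" where
  "DD' t = {psi \<in> DD t. \<forall>n\<ge>1. \<exists>k::nat. k \<ge> 1 \<and> psi n = 1 / real k}"

definition Pi_set :: "'d itself \<Rightarrow> ((real ^ 'd) \<times> (real ^ 'd)) set" where
  "Pi_set t = (\<Inter>psi \<in> DD t. (W psi :: ((real ^ 'd) \<times> (real ^ 'd)) set))"

end

theory Submission
  imports Defs
begin

text \<open>Rounding each value \<open>\<psi>(n)\<close> down to a reciprocal \<open>1/\<lceil>1/\<psi>(n)\<rceil>\<close> keeps \<open>\<psi>\<close> non-increasing,
  only shrinks it (so \<open>W\<close> can only shrink), and loses at most a factor 2 once \<open>\<psi>(n) < 1\<close>;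
  hence the divergence of \<open>\<Sum> \<psi>(n)\<^sup>d\<close> is preserved. Every \<open>\<psi> \<in> \<D>\<close> therefore dominates some
  \<open>\<phi> \<in> \<D>'\<close>, which gives the nontrivial inclusion.\<close>

definition unit_fraction_below :: "real \<Rightarrow> real" where
  "unit_fraction_below p = 1 / of_int \<lceil>1 / p\<rceil>"

lemma ceiling_inverse_ge_1:
  assumes "(p::real) > 0"
  shows "\<lceil>1 / p\<rceil> \<ge> 1"
  using assms by (simp add: one_le_ceiling)

lemma unit_fraction_below_is_reciprocal:
  assumes "p > 0"
  shows "\<exists>k::nat. k \<ge> 1 \<and> unit_fraction_below p = 1 / real k"
proof -
  have "\<lceil>1 / p\<rceil> \<ge> 1" using assms by (rule ceiling_inverse_ge_1)
  then have "nat \<lceil>1 / p\<rceil> \<ge> 1" and "real (nat \<lceil>1 / p\<rceil>) = of_int \<lceil>1 / p\<rceil>" by arith+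
  then show ?thesis unfolding unit_fraction_below_def by metis
qed

lemma unit_fraction_below_pos:
  assumes "p > 0"
  shows "unit_fraction_below p > 0"
  using assms by (simp add: unit_fraction_below_def)

lemma unit_fraction_below_le:
  assumes "p > 0"
  shows "unit_fraction_below p \<le> p"
proof -
  have "1 / p \<le> of_int \<lceil>1 / p\<rceil>" by (rule le_of_int_ceiling)
  then have "1 \<le> p * of_int \<lceil>1 / p\<rceil>" using assms by (metis divide_le_eq mult.commute)
  with ceiling_inverse_ge_1[OF assms] show ?thesis
    unfolding unit_fraction_below_def by (simp add: field_simps)
qed

lemma unit_fraction_below_mono:
  assumes "0 < q" "q \<le> p"
  shows "unit_fraction_below q \<le> unit_fraction_below p"
proof -
  have "1 / p \<le> 1 / q" using assms by (simp add: frac_le)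
  then have "\<lceil>1 / p\<rceil> \<le> \<lceil>1 / q\<rceil>" by (rule ceiling_mono)
  with ceiling_inverse_ge_1[of p] assms show ?thesis
    unfolding unit_fraction_below_def by (simp add: frac_le)
qed

lemma le_unit_fraction_below:
  assumes "p > 0"
  shows "p \<le> max 2 p * unit_fraction_below p"
proof (cases "p < 1")
  case True
  have "of_int \<lceil>1 / p\<rceil> < 1 / p + 1" by linarith
  also have "\<dots> < 2 / p" using True assms by (simp add: field_simps)
  finally have "p \<le> 2 * unit_fraction_below p"
    using assms ceiling_inverse_ge_1[OF assms]
    unfolding unit_fraction_below_def by (simp add: field_simps)
  also have "\<dots> \<le> max 2 p * unit_fraction_below p"
    using unit_fraction_below_pos[OF assms] by (intro mult_right_mono) auto
  finally show ?thesis .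
next
  case False
  with assms have "0 < 1 / p" "1 / p \<le> 1" by simp_all
  then have "\<lceil>1 / p\<rceil> = 1" by (simp add: ceiling_eq_iff)
  then show ?thesis by (simp add: unit_fraction_below_def)
qed

lemma DD_pos:
  assumes "psi \<in> DD TYPE('d::finite)" "n \<ge> 1"
  shows "psi n > 0"
proof (rule ccontr)
  assume "\<not> psi n > 0"
  with assms have vanish: "psi m = 0" if "m \<ge> n" for m
    using that unfolding DD_def by (smt (verit) mem_Collect_eq order_trans)
  have "summable (\<lambda>m. psi (Suc m) ^ CARD('d))"
    by (rule summable_comparison_test_ev[where g = "\<lambda>_. 0"])
      (auto simp: eventually_sequentially vanish intro!: exI[of _ n])
  with assms(1) show False unfolding DD_def by simp
qed

lemma W_mono:
  assumes "\<And>n. n \<ge> 1 \<Longrightarrow> phi n \<le> psi n"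
  shows "W phi \<subseteq> W psi"
proof
  fix z :: "(real ^ 'd) \<times> (real ^ 'd)"
  assume "z \<in> W phi"
  then obtain x y where z: "z = (x, y)"
    and "infinite {n. n \<ge> 1 \<and> znorm (of_nat n *\<^sub>R x + y) < phi n}"
    unfolding W_def by auto
  moreover have "{n. n \<ge> 1 \<and> znorm (of_nat n *\<^sub>R x + y) < phi n}
      \<subseteq> {n. n \<ge> 1 \<and> znorm (of_nat n *\<^sub>R x + y) < psi n}"
    using assms by (auto intro: less_le_trans)
  ultimately have "infinite {n. n \<ge> 1 \<and> znorm (of_nat n *\<^sub>R x + y) < psi n}"
    using infinite_super by blast
  then show "z \<in> W psi" unfolding W_def z by simp
qed

lemma unit_fraction_below_in_DD':
  assumes psi: "psi \<in> DD TYPE('d::finite)"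
  shows "(\<lambda>n. unit_fraction_below (psi n)) \<in> DD' TYPE('d)"
proof -
  define phi where "phi n = unit_fraction_below (psi n)" for n
  define C where "C = max 2 (psi 1)"
  have pos: "\<And>n. n \<ge> 1 \<Longrightarrow> psi n > 0" using DD_pos[OF psi] .
  have antimono: "\<And>m n. 1 \<le> m \<Longrightarrow> m \<le> n \<Longrightarrow> psi n \<le> psi m"
    and diverges: "\<not> summable (\<lambda>n. psi (Suc n) ^ CARD('d))"
    using psi unfolding DD_def by auto
  have phi_nonneg: "phi n \<ge> 0" if "n \<ge> 1" for n
    using unit_fraction_below_pos pos that unfolding phi_def by (simp add: less_imp_le)
  have bound: "psi n \<le> C * phi n" if "n \<ge> 1" for n
  proof -
    have "psi n \<le> max 2 (psi n) * phi n"
      using le_unit_fraction_below pos that unfolding phi_def by blast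
    also have "\<dots> \<le> C * phi n"
      unfolding C_def using antimono[of 1 n] that phi_nonneg
      by (intro mult_right_mono) auto
    finally show ?thesis .
  qed
  have "\<not> summable (\<lambda>n. phi (Suc n) ^ CARD('d))"
  proof
    assume "summable (\<lambda>n. phi (Suc n) ^ CARD('d))"
    then have "summable (\<lambda>n. C ^ CARD('d) * phi (Suc n) ^ CARD('d))"
      by (rule summable_mult)
    moreover have "norm (psi (Suc n) ^ CARD('d)) \<le> C ^ CARD('d) * phi (Suc n) ^ CARD('d)" for n
      using bound[of "Suc n"] pos[of "Suc n"]
      by (simp add: power_mult_distrib[symmetric] power_mono)
    ultimately have "summable (\<lambda>n. psi (Suc n) ^ CARD('d))"
      by (rule summable_comparison_test'[where N = 0])
    with diverges show False ..
  qed
  moreover have "phi n \<le> phi m" if "1 \<le> m" "m \<le> n" for m n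
    unfolding phi_def using that antimono pos by (simp add: unit_fraction_below_mono)
  moreover have "\<exists>k::nat. k \<ge> 1 \<and> phi n = 1 / real k" if "n \<ge> 1" for n
    unfolding phi_def using unit_fraction_below_is_reciprocal pos that by blast
  ultimately show ?thesis
    unfolding DD'_def DD_def phi_def[symmetric] using phi_nonneg by auto
qed

theorem lemma8:
  "Pi_set TYPE('d::finite) = (\<Inter>psi \<in> DD' TYPE('d). (W psi :: ((real ^ 'd) \<times> (real ^ 'd)) set))"
proof
  show "Pi_set TYPE('d) \<subseteq> (\<Inter>psi \<in> DD' TYPE('d). W psi)"
    unfolding Pi_set_def DD'_def by blast
  have "(\<Inter>phi \<in> DD' TYPE('d). W phi) \<subseteq> (W psi :: ((real ^ 'd) \<times> (real ^ 'd)) set)"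
    if "psi \<in> DD TYPE('d)" for psi
  proof -
    have "W (\<lambda>n. unit_fraction_below (psi n)) \<subseteq> (W psi :: ((real ^ 'd) \<times> (real ^ 'd)) set)"
      using unit_fraction_below_le DD_pos[OF that] by (intro W_mono) simp
    then show ?thesis using unit_fraction_below_in_DD'[OF that] by blast
  qed
  then show "(\<Inter>psi \<in> DD' TYPE('d). W psi) \<subseteq> Pi_set TYPE('d)"
    unfolding Pi_set_def by blast
qed

end
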